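(* Let $G$ be a finite graph and $K$ a maximal clique of $G$. Then $\log_2(\log_2(|\widetilde{K}|))\le\rho(K,N(K))$.
   Context: Two vertices are equivalent if they lie in exactly the same maximal cliques of $G$; $\widetilde{K}$ is the set of equivalence classes intersecting $K$. $N(K)$ is the set of vertices outside $K$ with a neighbour in $K$. For disjoint $X,Y\subseteq V(G)$, the local cutrank $\rho(X,Y)$ is the rank over $\mathbb{F}_2$ of the submatrix of the adjacency matrix of $G$ with rows indexed by $X$ and columns indexed by $Y$. *)

theory Defs
  imports Complex_Main "HOL-Library.Z2"
begin

text \<open>A finite simple graph is a finite vertex set V with a symmetric, irreflexive
  adjacency relation E (only its restriction to V matters).\<close>

definition simple_graph :: "'a set \<Rightarrow> ('a \<Rightarrow> 'a \<Rightarrow> bool) \<Rightarrow> bool" where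
  "simple_graph V E \<longleftrightarrow> finite V \<and> (\<forall>x y. E x y \<longrightarrow> E y x) \<and> (\<forall>x. \<not> E x x)"

definition clique :: "'a set \<Rightarrow> ('a \<Rightarrow> 'a \<Rightarrow> bool) \<Rightarrow> 'a set \<Rightarrow> bool" where
  "clique V E K \<longleftrightarrow> K \<subseteq> V \<and> (\<forall>x\<in>K. \<forall>y\<in>K. x \<noteq> y \<longrightarrow> E x y)"

definition maximal_clique :: "'a set \<Rightarrow> ('a \<Rightarrow> 'a \<Rightarrow> bool) \<Rightarrow> 'a set \<Rightarrow> bool" where
  "maximal_clique V E K \<longleftrightarrow> clique V E K \<and> (\<forall>K'. clique V E K' \<and> K \<subseteq> K' \<longrightarrow> K' = K)"

definition cliques_of :: "'a set \<Rightarrow> ('a \<Rightarrow> 'a \<Rightarrow> bool) \<Rightarrow> 'a \<Rightarrow> 'a set set" where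
  "cliques_of V E v = {K. maximal_clique V E K \<and> v \<in> K}"

definition eq_class :: "'a set \<Rightarrow> ('a \<Rightarrow> 'a \<Rightarrow> bool) \<Rightarrow> 'a \<Rightarrow> 'a set" where
  "eq_class V E v = {u \<in> V. cliques_of V E u = cliques_of V E v}"

text \<open>K-tilde: the set of equivalence classes intersecting K.\<close>
definition classes_meeting :: "'a set \<Rightarrow> ('a \<Rightarrow> 'a \<Rightarrow> bool) \<Rightarrow> 'a set \<Rightarrow> 'a set set" where
  "classes_meeting V E K = {C. \<exists>v\<in>V. C = eq_class V E v \<and> C \<inter> K \<noteq> {}}"

definition nbhd :: "'a set \<Rightarrow> ('a \<Rightarrow> 'a \<Rightarrow> bool) \<Rightarrow> 'a set \<Rightarrow> 'a set" where
  "nbhd V E K = {v \<in> V - K. \<exists>u\<in>K. E u v}"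

text \<open>Rows indexed by S are linearly independent over GF(2) in the X-by-Y submatrix
  of the adjacency matrix (entries of type bit = GF(2)).\<close>
definition rows_indep :: "('a \<Rightarrow> 'a \<Rightarrow> bool) \<Rightarrow> 'a set \<Rightarrow> 'a set \<Rightarrow> bool" where
  "rows_indep E Y S \<longleftrightarrow>
     (\<forall>c :: 'a \<Rightarrow> bit. (\<forall>y\<in>Y. (\<Sum>x\<in>S. c x * of_bool (E x y)) = 0) \<longrightarrow> (\<forall>x\<in>S. c x = 0))"

text \<open>Local cut-rank rho(X,Y): the GF(2)-rank (row rank) of the adjacency submatrix
  with rows X and columns Y.\<close>
definition cutrank :: "('a \<Rightarrow> 'a \<Rightarrow> bool) \<Rightarrow> 'a set \<Rightarrow> 'a set \<Rightarrow> nat" where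
  "cutrank E X Y = Max {card S | S. S \<subseteq> X \<and> rows_indep E Y S}"

end

theory Submission
  imports Defs
begin

text \<open>Let S be a maximal set of GF(2)-independent rows of the K-by-N(K) adjacency matrix,
  so that |S| = rho(K, N(K)). Every row indexed by K is the sum of a subset of the rows in S,
  hence there are at most 2^|S| distinct rows. Two vertices of the maximal clique K with the
  same neighbours in N(K) lie in exactly the same maximal cliques, so the number of
  equivalence classes meeting K is at most the number of distinct rows. This gives
  |K-tilde| \<le> 2^rho, which is even stronger than the claimed double-logarithmic bound.\<close>

lemma log2_log2_le_of_le_power2:
  fixes c r :: nat
  assumes "c \<le> 2 ^ r"
  shows "log 2 (log 2 (real c)) \<le> real r"
proof (cases "log 2 (real c) > 0")
  case False
  then have "c = 0 \<or> c = 1" by (cases "c \<le> 1") auto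
  then show ?thesis by (auto simp: log_def)
next
  case True
  then have "c > 0" by (cases "c = 0") (auto simp: log_def)
  with assms have "log 2 (real c) \<le> real r"
    by (simp add: log_le_iff powr_realpow)
  with True have "log 2 (log 2 (real c)) \<le> log 2 (real r)"
    by simp
  also have "\<dots> < real r"
    using \<open>log 2 (real c) \<le> real r\<close> True less_exp[of r]
    by (simp add: log_less_iff powr_realpow)
  finally show ?thesis by simp
qed

lemma card_image_le_card_image_if_factors:
  assumes "finite A"
    and factors: "\<And>x x'. x \<in> A \<Longrightarrow> x' \<in> A \<Longrightarrow> f x = f x' \<Longrightarrow> g x = g x'"
  shows "card (g ` A) \<le> card (f ` A)"
proof -
  have "g ` A \<subseteq> (g \<circ> inv_into A f) ` f ` A"
  proof
    fix z assume "z \<in> g ` A"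
    then obtain x where "x \<in> A" "z = g x" by blast
    moreover have "g (inv_into A f (f x)) = g x"
      using \<open>x \<in> A\<close> by (intro factors inv_into_into f_inv_into_f) auto
    ultimately have "z = (g \<circ> inv_into A f) (f x)" by simp
    with \<open>x \<in> A\<close> show "z \<in> (g \<circ> inv_into A f) ` f ` A" by blast
  qed
  then have "card (g ` A) \<le> card ((g \<circ> inv_into A f) ` f ` A)"
    using assms(1) by (intro card_mono) auto
  also have "\<dots> \<le> card (f ` A)" by (rule card_image_le) (use assms(1) in simp)
  finally show ?thesis .
qed

lemma row_in_span_if_not_rows_indep_insert:
  fixes E :: "'a \<Rightarrow> 'a \<Rightarrow> bool"
  assumes fin: "finite S" and indep: "rows_indep E Y S"
    and dep: "\<not> rows_indep E Y (insert x S)"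
  shows "\<exists>T\<subseteq>S. \<forall>y\<in>Y. (of_bool (E x y) :: bit) = (\<Sum>s\<in>T. of_bool (E s y))"
proof -
  have "x \<notin> S" using indep dep by (metis insert_absorb)
  obtain c :: "'a \<Rightarrow> bit"
    where dependency: "\<forall>y\<in>Y. (\<Sum>z\<in>insert x S. c z * of_bool (E z y)) = 0"
      and nontrivial: "\<exists>z\<in>insert x S. c z \<noteq> 0"
    using dep unfolding rows_indep_def by blast
  have dependency_split: "\<forall>y\<in>Y. c x * of_bool (E x y) + (\<Sum>z\<in>S. c z * of_bool (E z y)) = 0"
    using dependency by (simp only: sum.insert[OF fin \<open>x \<notin> S\<close>])
  have "c x = 1"
  proof (rule ccontr)
    assume "c x \<noteq> 1"
    then have "c x = 0" by simp
    with dependency_split have "\<forall>y\<in>Y. (\<Sum>z\<in>S. c z * of_bool (E z y)) = 0" by simp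
    with indep have "\<forall>z\<in>S. c z = 0" unfolding rows_indep_def by blast
    with nontrivial \<open>c x = 0\<close> show False by auto
  qed
  define T where "T = {z \<in> S. c z = 1}"
  have sum_T: "(\<Sum>s\<in>T. of_bool (E s y)) = (\<Sum>z\<in>S. c z * (of_bool (E z y) :: bit))" for y
    unfolding T_def sum.inter_filter[OF fin] by (rule sum.cong) auto
  have row_x: "(of_bool (E x y) :: bit) = (\<Sum>z\<in>S. c z * of_bool (E z y))" if "y \<in> Y" for y
    using dependency_split that \<open>c x = 1\<close> by (simp add: eq_neg_iff_add_eq_0)
  show ?thesis
  proof (intro exI[of _ T] conjI ballI)
    show "T \<subseteq> S" by (simp add: T_def)
    show "(of_bool (E x y) :: bit) = (\<Sum>s\<in>T. of_bool (E s y))" if "y \<in> Y" for y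
      using row_x[OF that] sum_T[of y] by (rule trans[OF _ sym])
  qed
qed

lemma cutrank_attained:
  assumes "finite X"
  obtains S where "S \<subseteq> X" "rows_indep E Y S" "card S = cutrank E X Y"
    "\<forall>S'\<subseteq>X. rows_indep E Y S' \<longrightarrow> card S' \<le> card S"
proof -
  let ?ranks = "{card S | S. S \<subseteq> X \<and> rows_indep E Y S}"
  have fin: "finite ?ranks"
    by (rule finite_subset[of _ "{..card X}"]) (use assms card_mono in fastforce)+
  have "rows_indep E Y {}" unfolding rows_indep_def by blast
  then have "?ranks \<noteq> {}" by auto
  with fin have "cutrank E X Y \<in> ?ranks" unfolding cutrank_def by (rule Max_in)
  then obtain S where "S \<subseteq> X" "rows_indep E Y S" "card S = cutrank E X Y"
    unfolding mem_Collect_eq by metis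
  moreover have "\<forall>S'\<subseteq>X. rows_indep E Y S' \<longrightarrow> card S' \<le> cutrank E X Y"
    unfolding cutrank_def using fin by (blast intro: Max_ge)
  ultimately show ?thesis using that by simp
qed

lemma card_traces_le_power_cutrank:
  assumes "finite X"
  shows "card ((\<lambda>x. {y \<in> Y. E x y}) ` X) \<le> 2 ^ cutrank E X Y"
proof -
  obtain S where SX: "S \<subseteq> X" and indep: "rows_indep E Y S" and card_S: "card S = cutrank E X Y"
    and maximal: "\<forall>S'\<subseteq>X. rows_indep E Y S' \<longrightarrow> card S' \<le> card S"
    using cutrank_attained[OF assms, of E Y] .
  have fin: "finite S" using SX assms by (rule finite_subset)
  define row_sum where "row_sum T = {y \<in> Y. (\<Sum>s\<in>T. of_bool (E s y)) = (1 :: bit)}" for T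
  have "{y \<in> Y. E x y} \<in> row_sum ` Pow S" if "x \<in> X" for x
  proof -
    have "\<exists>T\<subseteq>S. \<forall>y\<in>Y. (of_bool (E x y) :: bit) = (\<Sum>s\<in>T. of_bool (E s y))"
    proof (cases "x \<in> S")
      case True
      then show ?thesis by (intro exI[of _ "{x}"]) simp
    next
      case False
      then have "card (insert x S) > card S" using fin by simp
      moreover have "insert x S \<subseteq> X" using SX that by simp
      ultimately have "\<not> rows_indep E Y (insert x S)" using maximal by (meson leD)
      then show ?thesis using row_in_span_if_not_rows_indep_insert[OF fin indep] by blast
    qed
    then obtain T where "T \<subseteq> S"
      and T_row: "\<forall>y\<in>Y. (of_bool (E x y) :: bit) = (\<Sum>s\<in>T. of_bool (E s y))"
      by blast
    have "E x y \<longleftrightarrow> (\<Sum>s\<in>T. of_bool (E s y)) = (1 :: bit)" if "y \<in> Y" for y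
      using T_row that by (metis of_bool_eq_1_iff)
    then have "{y \<in> Y. E x y} = row_sum T"
      unfolding row_sum_def by blast
    with \<open>T \<subseteq> S\<close> show ?thesis by blast
  qed
  then have "card ((\<lambda>x. {y \<in> Y. E x y}) ` X) \<le> card (row_sum ` Pow S)"
    using fin by (intro card_mono) auto
  also have "\<dots> \<le> card (Pow S)" by (rule card_image_le) (use fin in simp)
  also have "\<dots> = 2 ^ cutrank E X Y" using fin card_S by (simp add: card_Pow)
  finally show ?thesis .
qed

lemma cliques_of_subset_if_same_nbhd_adjacency:
  assumes G: "simple_graph V E" and K: "maximal_clique V E K"
    and x: "x \<in> K" and x': "x' \<in> K"
    and same: "\<forall>y\<in>nbhd V E K. E x y \<longleftrightarrow> E x' y"
  shows "cliques_of V E x \<subseteq> cliques_of V E x'"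
proof
  fix C assume "C \<in> cliques_of V E x"
  then have C: "maximal_clique V E C" and "x \<in> C" by (auto simp: cliques_of_def)
  have sym: "\<And>a b. E a b \<Longrightarrow> E b a" using G by (auto simp: simple_graph_def)
  have "K \<subseteq> V" and K_clique: "\<forall>a\<in>K. \<forall>b\<in>K. a \<noteq> b \<longrightarrow> E a b"
    using K by (auto simp: maximal_clique_def clique_def)
  have "C \<subseteq> V" and C_clique: "\<forall>a\<in>C. \<forall>b\<in>C. a \<noteq> b \<longrightarrow> E a b"
    using C by (auto simp: maximal_clique_def clique_def)
  have adjacent: "E z x'" if "z \<in> C" "z \<noteq> x'" for z
  proof (cases "z \<in> K")
    case True
    then show ?thesis using K_clique x' that by auto
  next
    case False
    then have "E x z" using C_clique \<open>x \<in> C\<close> x that by auto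
    moreover have "z \<in> nbhd V E K"
      using \<open>E x z\<close> False x \<open>C \<subseteq> V\<close> that by (auto simp: nbhd_def)
    ultimately show ?thesis using same sym by blast
  qed
  have "clique V E (insert x' C)"
    unfolding clique_def using \<open>C \<subseteq> V\<close> \<open>K \<subseteq> V\<close> x' C_clique adjacent sym by auto
  then have "x' \<in> C" using C by (auto simp: maximal_clique_def)
  with C show "C \<in> cliques_of V E x'" by (simp add: cliques_of_def)
qed

lemma eq_class_eq_if_same_nbhd_adjacency:
  assumes "simple_graph V E" "maximal_clique V E K" "x \<in> K" "x' \<in> K"
    and "{y \<in> nbhd V E K. E x y} = {y \<in> nbhd V E K. E x' y}"
  shows "eq_class V E x = eq_class V E x'"
proof -
  have "\<forall>y\<in>nbhd V E K. E x y \<longleftrightarrow> E x' y" using assms(5) by blast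
  then have "cliques_of V E x = cliques_of V E x'"
    using cliques_of_subset_if_same_nbhd_adjacency[OF assms(1,2)] assms(3,4) by (metis subset_antisym)
  then show ?thesis by (simp add: eq_class_def)
qed

lemma classes_meeting_subset_eq_class_image:
  "classes_meeting V E K \<subseteq> eq_class V E ` K"
proof
  fix C assume "C \<in> classes_meeting V E K"
  then obtain v u where "v \<in> V" "C = eq_class V E v" "u \<in> C" "u \<in> K"
    by (auto simp: classes_meeting_def)
  then have "C = eq_class V E u" by (auto simp: eq_class_def)
  with \<open>u \<in> K\<close> show "C \<in> eq_class V E ` K" by blast
qed

theorem corollary7p3:
  fixes V :: "'a set" and E :: "'a \<Rightarrow> 'a \<Rightarrow> bool" and K :: "'a set"
  assumes "simple_graph V E"
    and "maximal_clique V E K"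
  shows "log 2 (log 2 (real (card (classes_meeting V E K)))) \<le> real (cutrank E K (nbhd V E K))"
proof -
  have "finite K"
    using assms by (meson finite_subset simple_graph_def maximal_clique_def clique_def)
  then have "card (classes_meeting V E K) \<le> card (eq_class V E ` K)"
    by (intro card_mono classes_meeting_subset_eq_class_image) simp
  also have "\<dots> \<le> card ((\<lambda>x. {y \<in> nbhd V E K. E x y}) ` K)"
    using \<open>finite K\<close> eq_class_eq_if_same_nbhd_adjacency[OF assms]
    by (rule card_image_le_card_image_if_factors)
  also have "\<dots> \<le> 2 ^ cutrank E K (nbhd V E K)"
    using \<open>finite K\<close> by (rule card_traces_le_power_cutrank)
  finally show ?thesis by (rule log2_log2_le_of_le_power2)
qed

end
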